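(* Let $\langle c^m,c^M\rangle$ be a cell of size $n$ and $i\in[n-1]$. (i) If $c^m_i<0$ then $c^M_i\leq 0$. (ii) If $c^m_i\geq 0$ then $c^M_i>0$.
   Context: A Tamari diagram of size $n$ is a word $u=u_1\cdots u_n$ of integers with $0\leq u_i\leq n-i$ and $u_{i+j}\leq u_i-j$ for all $i\in[n]$, $0\leq j\leq u_i$. A dual Tamari diagram of size $n$ is a word $v$ of integers with $0\leq v_i\leq i-1$ and $v_{i-j}\leq v_i-j$ for all $i\in[n]$, $0\leq j\leq v_i$. $(u,v)$ is a Tamari interval diagram if moreover for all $1\leq i<j\leq n$ with $j-i\leq u_i$ one has $v_j<j-i$. A cubic coordinate of size $n$ is $c\in\mathbb{Z}^{n-1}$ such that $(u,v)$ with $u_i=\max(c_i,0)$ ($i\in[n-1]$), $u_n=0$, $v_1=0$, $v_i=|\min(c_{i-1},0)|$ ($2\leq i\leq n$) is a Tamari interval diagram. For a cubic coordinate $c$ and $i\in[n-1]$, the minimal increase $\uparrow_i(c)$ is defined when there exists a cubic coordinate agreeing with $c$ outside position $i$ and with $i$-th entry $>c_i$; then $\uparrow_i(c)$ is obtained from $c$ by replacing $c_i$ by the smallest integer $t>c_i$ such that the result is a cubic coordinate. $c$ is minimal-cellular if $\uparrow_i(c)$ is defined for all $i\in[n-1]$. A cell of size $n$ is a pair $\langle c^m,c^M\rangle$ where $c^m$ is a minimal-cellular cubic coordinate of size $n$ and $c^M=\uparrow_1(\uparrow_2(\cdots(\uparrow_{n-1}(c^m))\cdots))$ (every step of this composition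 is defined). *)

theory Defs
  imports Main
begin

(* Words are 1-indexed functions nat => int; only positions 1..n matter. *)

definition tamari_diagram :: "nat \<Rightarrow> (nat \<Rightarrow> int) \<Rightarrow> bool" where
  "tamari_diagram n u \<longleftrightarrow>
     (\<forall>i\<in>{1..n}. 0 \<le> u i \<and> u i \<le> int (n - i) \<and>
        (\<forall>j::nat. int j \<le> u i \<longrightarrow> u (i + j) \<le> u i - int j))"

definition dual_tamari_diagram :: "nat \<Rightarrow> (nat \<Rightarrow> int) \<Rightarrow> bool" where
  "dual_tamari_diagram n v \<longleftrightarrow>
     (\<forall>i\<in>{1..n}. 0 \<le> v i \<and> v i \<le> int i - 1 \<and>
        (\<forall>j::nat. int j \<le> v i \<longrightarrow> v (i - j) \<le> v i - int j))"

definition tamari_interval_diagram :: "nat \<Rightarrow> (nat \<Rightarrow> int) \<Rightarrow> (nat \<Rightarrow> int) \<Rightarrow> bool" where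
  "tamari_interval_diagram n u v \<longleftrightarrow>
     tamari_diagram n u \<and> dual_tamari_diagram n v \<and>
     (\<forall>i j. 1 \<le> i \<and> i < j \<and> j \<le> n \<and> int (j - i) \<le> u i \<longrightarrow> v j < int (j - i))"

(* A cubic coordinate of size n is a list c of length n-1; c_i = c ! (i-1). *)
definition cubic_coord :: "nat \<Rightarrow> int list \<Rightarrow> bool" where
  "cubic_coord n c \<longleftrightarrow> length c = n - 1 \<and>
     tamari_interval_diagram n
       (\<lambda>i. if 1 \<le> i \<and> i \<le> n - 1 then max (c ! (i - 1)) 0 else 0)
       (\<lambda>i. if 2 \<le> i \<and> i \<le> n then \<bar>min (c ! (i - 2)) 0\<bar> else 0)"

definition inc_defined :: "nat \<Rightarrow> int list \<Rightarrow> nat \<Rightarrow> bool" where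
  "inc_defined n c i \<longleftrightarrow> (\<exists>t. t > c ! (i - 1) \<and> cubic_coord n (c[i - 1 := t]))"

definition min_inc :: "nat \<Rightarrow> int list \<Rightarrow> nat \<Rightarrow> int list" where
  "min_inc n c i = c[i - 1 := (LEAST t. t > c ! (i - 1) \<and> cubic_coord n (c[i - 1 := t]))]"

definition minimal_cellular :: "nat \<Rightarrow> int list \<Rightarrow> bool" where
  "minimal_cellular n c \<longleftrightarrow> cubic_coord n c \<and> (\<forall>i\<in>{1..n-1}. inc_defined n c i)"

(* up_1(up_2(...(up_{n-1}(c))...)) *)
definition up_all :: "nat \<Rightarrow> int list \<Rightarrow> int list" where
  "up_all n c = foldr (\<lambda>i d. min_inc n d i) [1..<n] c"

definition is_cell :: "nat \<Rightarrow> int list \<Rightarrow> int list \<Rightarrow> bool" where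
  "is_cell n cm cM \<longleftrightarrow> minimal_cellular n cm \<and>
     (\<forall>k\<in>{1..n-1}. inc_defined n (foldr (\<lambda>i d. min_inc n d i) [k+1..<n] cm) k) \<and>
     cM = up_all n cm"

end

theory Submission
  imports Defs
begin

text \<open>The minimal increase at position \<open>i\<close> only changes the \<open>i\<close>-th entry, so in the
  composition defining \<open>c\<^sup>M\<close> the \<open>i\<close>-th entry of \<open>c\<^sup>M\<close> is the minimal increase of
  \<open>c\<^sup>m\<^sub>i\<close>, computed in a cubic coordinate that still has \<open>c\<^sup>m\<^sub>i\<close> at position \<open>i\<close>.
  Any such increase is \<open>> c\<^sup>m\<^sub>i\<close>, which gives (ii). For (i), replacing an entry of a
  cubic coordinate by \<open>0\<close> only sets some letters of both diagrams to \<open>0\<close>, and all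
  defining inequalities survive that; so \<open>0 > c\<^sup>m\<^sub>i\<close> is itself an admissible increase.\<close>

lemma tamari_diagram_mask:
  assumes "tamari_diagram n u" and "\<And>i. u' i = u i \<or> u' i = 0"
  shows "tamari_diagram n u'"
  unfolding tamari_diagram_def
proof (intro ballI conjI allI impI)
  fix i assume i: "i \<in> {1..n}"
  then have u: "0 \<le> u i" "u i \<le> int (n - i)" "\<And>j. int j \<le> u i \<Longrightarrow> u (i + j) \<le> u i - int j"
    using assms(1) unfolding tamari_diagram_def by auto
  then show "0 \<le> u' i" "u' i \<le> int (n - i)"
    using assms(2)[of i] by auto
  fix j :: nat assume "int j \<le> u' i"
  then show "u' (i + j) \<le> u' i - int j"
    using u assms(2)[of i] assms(2)[of "i + j"] by fastforce
qed

lemma dual_tamari_diagram_mask: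
  assumes "dual_tamari_diagram n v" and "\<And>i. v' i = v i \<or> v' i = 0"
  shows "dual_tamari_diagram n v'"
  unfolding dual_tamari_diagram_def
proof (intro ballI conjI allI impI)
  fix i assume i: "i \<in> {1..n}"
  then have v: "0 \<le> v i" "v i \<le> int i - 1" "\<And>j. int j \<le> v i \<Longrightarrow> v (i - j) \<le> v i - int j"
    using assms(1) unfolding dual_tamari_diagram_def by auto
  then show "0 \<le> v' i" "v' i \<le> int i - 1"
    using assms(2)[of i] by auto
  fix j :: nat assume "int j \<le> v' i"
  then show "v' (i - j) \<le> v' i - int j"
    using v assms(2)[of i] assms(2)[of "i - j"] by fastforce
qed

lemma tamari_interval_diagram_mask:
  assumes "tamari_interval_diagram n u v"
    and "\<And>i. u' i = u i \<or> u' i = 0" and "\<And>i. v' i = v i \<or> v' i = 0"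
  shows "tamari_interval_diagram n u' v'"
proof -
  have u: "tamari_diagram n u" and v: "dual_tamari_diagram n v"
    using assms(1) unfolding tamari_interval_diagram_def by auto
  have "v' j < int (j - i)"
    if ij: "1 \<le> i" "i < j" "j \<le> n" "int (j - i) \<le> u' i" for i j
  proof -
    have "u' i \<le> u i"
      using u ij assms(2)[of i] unfolding tamari_diagram_def by auto
    then have "v j < int (j - i)"
      using assms(1) ij unfolding tamari_interval_diagram_def by auto
    moreover have "v' j \<le> v j"
      using v ij assms(3)[of j] unfolding dual_tamari_diagram_def by auto
    ultimately show ?thesis by simp
  qed
  then show ?thesis
    using tamari_diagram_mask[OF u assms(2)] dual_tamari_diagram_mask[OF v assms(3)]
    unfolding tamari_interval_diagram_def by blast
qed

lemma cubic_coord_update_zero: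
  assumes "cubic_coord n c"
  shows "cubic_coord n (c[k := 0])"
  using assms unfolding cubic_coord_def
proof (intro conjI)
  assume c: "length c = n - 1 \<and> tamari_interval_diagram n
    (\<lambda>i. if 1 \<le> i \<and> i \<le> n - 1 then max (c ! (i - 1)) 0 else 0)
    (\<lambda>i. if 2 \<le> i \<and> i \<le> n then \<bar>min (c ! (i - 2)) 0\<bar> else 0)"
    (is "_ \<and> tamari_interval_diagram n ?u ?v")
  then show "length (c[k := 0]) = n - 1" by simp
  show "tamari_interval_diagram n
    (\<lambda>i. if 1 \<le> i \<and> i \<le> n - 1 then max (c[k := 0] ! (i - 1)) 0 else 0)
    (\<lambda>i. if 2 \<le> i \<and> i \<le> n then \<bar>min (c[k := 0] ! (i - 2)) 0\<bar> else 0)"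
    (is "tamari_interval_diagram n ?u' ?v'")
  proof (rule tamari_interval_diagram_mask[OF c[THEN conjunct2]])
    have "c[k := 0] ! p = c ! p \<or> c[k := 0] ! p = 0" for p
      by (cases "p = k"; cases "k < length c") (auto simp: list_update_beyond)
    then show "\<And>i. ?u' i = ?u i \<or> ?u' i = 0" "\<And>i. ?v' i = ?v i \<or> ?v' i = 0"
      by (metis max.idem min.idem abs_zero)+
  qed
qed

lemma length_foldr_min_inc: "length (foldr (\<lambda>i d. min_inc n d i) xs c) = length c"
  by (induction xs) (auto simp: min_inc_def)

lemma foldr_min_inc_nth_other:
  assumes "\<forall>x\<in>set xs. x - 1 \<noteq> p"
  shows "foldr (\<lambda>i d. min_inc n d i) xs c ! p = c ! p"
  using assms by (induction xs) (auto simp: min_inc_def)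

lemma Least_int_bdd_below:
  fixes P :: "int \<Rightarrow> bool"
  assumes "P t" and "\<And>t. P t \<Longrightarrow> a < t"
  shows "P (Least P)" and "\<And>y. P y \<Longrightarrow> Least P \<le> y"
proof -
  define k where "k = (LEAST k. P (a + 1 + int k))"
  have "P (a + 1 + int (nat (t - a - 1)))"
    using assms by (smt (verit) int_nat_eq)
  then have Pk: "P (a + 1 + int k)"
    unfolding k_def by (rule LeastI)
  have le: "a + 1 + int k \<le> y" if "P y" for y
  proof -
    have "a < y" using assms(2) that .
    then have "P (a + 1 + int (nat (y - a - 1)))" using that by simp
    then have "k \<le> nat (y - a - 1)" unfolding k_def by (rule Least_le)
    then show ?thesis using \<open>a < y\<close> by linarith
  qed
  have "Least P = a + 1 + int k"
    using Pk le by (rule Least_equality)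
  then show "P (Least P)" and "\<And>y. P y \<Longrightarrow> Least P \<le> y"
    using Pk le by simp_all
qed

lemma min_inc_nth:
  assumes "inc_defined n c i" and "i - 1 < length c"
  shows "min_inc n c i ! (i - 1) > c ! (i - 1)"
    and "c ! (i - 1) < 0 \<Longrightarrow> min_inc n c i ! (i - 1) \<le> 0"
proof -
  let ?P = "\<lambda>t. t > c ! (i - 1) \<and> cubic_coord n (c[i - 1 := t])"
  obtain t where t: "?P t" using assms(1) unfolding inc_defined_def by blast
  have nth: "min_inc n c i ! (i - 1) = Least ?P"
    unfolding min_inc_def using assms(2) by simp
  note least = Least_int_bdd_below[of ?P t "c ! (i - 1)", OF t]
  show "min_inc n c i ! (i - 1) > c ! (i - 1)"
    unfolding nth using least(1) by simp
  assume "c ! (i - 1) < 0"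
  moreover have "cubic_coord n (c[i - 1 := 0])"
    using cubic_coord_update_zero[of n "c[i - 1 := t]" "i - 1"] t by simp
  ultimately show "min_inc n c i ! (i - 1) \<le> 0"
    unfolding nth using least(2)[of 0] by simp
qed

lemma cell_nth:
  assumes "is_cell n cm cM" and "1 \<le> i" and "i \<le> n - 1"
  defines "d \<equiv> foldr (\<lambda>i d. min_inc n d i) [i+1..<n] cm"
  shows "cM ! (i - 1) = min_inc n d i ! (i - 1)"
    and "d ! (i - 1) = cm ! (i - 1)"
    and "inc_defined n d i"
    and "i - 1 < length d"
proof -
  let ?f = "\<lambda>i d. min_inc n d i"
  have "[1..<n] = [1..<i] @ [i..<n]"
    using assms(2,3) upt_add_eq_append[of 1 i "n - i"] by simp
  also have "[i..<n] = i # [i+1..<n]"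
    using assms(2,3) by (simp add: upt_rec)
  finally have "[1..<n] = [1..<i] @ i # [i+1..<n]" .
  then have "cM = foldr ?f [1..<i] (min_inc n d i)"
    using assms(1) unfolding is_cell_def up_all_def d_def by simp
  moreover have "\<forall>x\<in>set [1..<i]. x - 1 \<noteq> i - 1"
    by auto
  ultimately show "cM ! (i - 1) = min_inc n d i ! (i - 1)"
    using foldr_min_inc_nth_other by metis
  show "d ! (i - 1) = cm ! (i - 1)"
    unfolding d_def by (rule foldr_min_inc_nth_other) (use assms(2) in auto)
  show "inc_defined n d i"
    using assms(1-3) unfolding is_cell_def d_def by auto
  show "i - 1 < length d"
    using assms(1-3) unfolding d_def is_cell_def minimal_cellular_def cubic_coord_def
    by (simp add: length_foldr_min_inc)
qed

theorem lemma4p6: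
  fixes n i :: nat and cm cM :: "int list"
  assumes "is_cell n cm cM" and "1 \<le> i" and "i \<le> n - 1"
  shows "(cm ! (i - 1) < 0 \<longrightarrow> cM ! (i - 1) \<le> 0) \<and>
         (cm ! (i - 1) \<ge> 0 \<longrightarrow> cM ! (i - 1) > 0)"
proof -
  define d where "d = foldr (\<lambda>i d. min_inc n d i) [i+1..<n] cm"
  note cell = cell_nth[OF assms, folded d_def]
  note inc = min_inc_nth[OF cell(3,4)]
  show ?thesis
    unfolding cell(1) cell(2)[symmetric] using inc by (simp add: not_less)
qed

end
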